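(* If $\mathcal G$ is a core network with input nodes $\iota_1,\dots,\iota_n$ and output node $o$, then at most one input node of $\mathcal G$ is an absolutely super-simple node.
   Context: Node $b$ is downstream from $a$ (and $a$ upstream from $b$) if there is a directed path from $a$ to $b$. A core network: every node is upstream from $o$ and downstream from at least one input node. A simple path visits each node at most once; an $\iota_mo$-simple path is a simple path from $\iota_m$ to $o$. A node is absolutely super-simple if, for every $m=1,\dots,n$, it lies on every $\iota_mo$-simple path. *)

theory Defs
  imports Main
begin

definition downstream :: "('a \<times> 'a) set \<Rightarrow> 'a \<Rightarrow> 'a \<Rightarrow> bool" where
  "downstream E a b \<longleftrightarrow> (a, b) \<in> E\<^sup>*"

definition core_network ::
  "'a set \<Rightarrow> ('a \<times> 'a) set \<Rightarrow> nat \<Rightarrow> (nat \<Rightarrow> 'a) \<Rightarrow> 'a \<Rightarrow> bool" where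
  "core_network V E n \<iota> o' \<longleftrightarrow>
     finite V \<and> E \<subseteq> V \<times> V \<and> o' \<in> V \<and>
     (\<forall>m\<in>{1..n}. \<iota> m \<in> V \<and> \<iota> m \<noteq> o') \<and> inj_on \<iota> {1..n} \<and>
     (\<forall>v\<in>V. downstream E v o' \<and> (\<exists>m\<in>{1..n}. downstream E (\<iota> m) v))"

definition simple_path :: "('a \<times> 'a) set \<Rightarrow> 'a \<Rightarrow> 'a \<Rightarrow> 'a list \<Rightarrow> bool" where
  "simple_path E a b p \<longleftrightarrow>
     p \<noteq> [] \<and> hd p = a \<and> last p = b \<and> distinct p \<and>
     (\<forall>i. Suc i < length p \<longrightarrow> (p ! i, p ! Suc i) \<in> E)"

definition absolutely_super_simple ::
  "('a \<times> 'a) set \<Rightarrow> nat \<Rightarrow> (nat \<Rightarrow> 'a) \<Rightarrow> 'a \<Rightarrow> 'a \<Rightarrow> bool" where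
  "absolutely_super_simple E n \<iota> o' v \<longleftrightarrow>
     (\<forall>m\<in>{1..n}. \<forall>p. simple_path E (\<iota> m) o' p \<longrightarrow> v \<in> set p)"

end

theory Submission
  imports Defs
begin

text \<open>In a core network every node reaches \<open>o\<close>, so there is a simple path from \<open>\<iota> j\<close> to \<open>o\<close>.
  It passes through \<open>\<iota> k\<close>, and its suffix from \<open>\<iota> k\<close> is a simple path from \<open>\<iota> k\<close> to \<open>o\<close>,
  which must pass through \<open>\<iota> j\<close>. As the path is simple and starts at \<open>\<iota> j\<close>, the suffix
  can only be the whole path, so \<open>\<iota> k = \<iota> j\<close>.\<close>

lemma simple_path_drop:
  assumes "simple_path E a b p" and "i < length p"
  shows "simple_path E (p ! i) b (drop i p)"
  using assms by (simp add: simple_path_def hd_drop_conv_nth)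

lemma simple_path_Cons:
  assumes "simple_path E c b p" and "(a, c) \<in> E" and "a \<notin> set p"
  shows "simple_path E a b (a # p)"
  unfolding simple_path_def
proof (intro conjI allI impI)
  show "last (a # p) = b" and "distinct (a # p)"
    using assms by (auto simp: simple_path_def)
  fix k assume "Suc k < length (a # p)"
  with assms show "((a # p) ! k, (a # p) ! Suc k) \<in> E"
    by (cases k; cases p) (auto simp: simple_path_def)
qed simp_all

lemma rtrancl_imp_simple_path:
  assumes "(a, b) \<in> E\<^sup>*"
  obtains p where "simple_path E a b p"
proof -
  from assms have "\<exists>p. simple_path E a b p"
  proof (induction rule: converse_rtrancl_induct)
    case base
    have "simple_path E b b [b]" by (simp add: simple_path_def)
    then show ?case ..
  next
    case (step a c)
    then obtain p where p: "simple_path E c b p" by blast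
    show ?case
    proof (cases "a \<in> set p")
      case True
      then obtain i where "i < length p" "p ! i = a" by (auto simp: in_set_conv_nth)
      with simple_path_drop[OF p] show ?thesis by metis
    next
      case False
      with simple_path_Cons[OF p step(1)] show ?thesis by blast
    qed
  qed
  with that show thesis by blast
qed

lemma simple_path_start_in_drop:
  assumes "simple_path E a b p" and "a \<in> set (drop i p)"
  shows "i = 0"
proof (rule ccontr)
  assume "i \<noteq> 0"
  from assms(1) obtain t where p: "p = a # t" and "a \<notin> set t"
    by (cases p) (auto simp: simple_path_def)
  moreover have "set (drop i p) \<subseteq> set t"
    using \<open>i \<noteq> 0\<close> by (cases i) (simp_all add: p set_drop_subset)
  ultimately show False using assms(2) by blast
qed

lemma mutually_unavoidable_nodes_eq:
  assumes "(a, b) \<in> E\<^sup>*"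
    and a_c: "\<And>p. simple_path E a b p \<Longrightarrow> c \<in> set p"
    and c_a: "\<And>p. simple_path E c b p \<Longrightarrow> a \<in> set p"
  shows "a = c"
proof -
  obtain p where p: "simple_path E a b p"
    using rtrancl_imp_simple_path[OF assms(1)] .
  obtain i where i: "i < length p" "p ! i = c"
    using a_c[OF p] by (auto simp: in_set_conv_nth)
  have "a \<in> set (drop i p)"
    using c_a simple_path_drop[OF p i(1)] i(2) by simp
  then have "i = 0" by (rule simple_path_start_in_drop[OF p])
  with p i show ?thesis by (cases p) (auto simp: simple_path_def)
qed

theorem corollary3p18:
  fixes V :: "'a set" and E :: "('a \<times> 'a) set" and n :: nat
    and \<iota> :: "nat \<Rightarrow> 'a" and o' :: 'a
  assumes "core_network V E n \<iota> o'"
  shows "\<forall>j\<in>{1..n}. \<forall>k\<in>{1..n}.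
           absolutely_super_simple E n \<iota> o' (\<iota> j) \<and>
           absolutely_super_simple E n \<iota> o' (\<iota> k) \<longrightarrow> \<iota> j = \<iota> k"
proof (intro ballI impI)
  fix j k assume j: "j \<in> {1..n}" and k: "k \<in> {1..n}"
    and super_simple: "absolutely_super_simple E n \<iota> o' (\<iota> j) \<and>
                       absolutely_super_simple E n \<iota> o' (\<iota> k)"
  have "(\<iota> j, o') \<in> E\<^sup>*"
    using assms j unfolding core_network_def downstream_def by blast
  then show "\<iota> j = \<iota> k"
    using super_simple j k unfolding absolutely_super_simple_def
    by (intro mutually_unavoidable_nodes_eq) blast+
qed

end
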